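(* Let $f=(a,b,c,d)$ be a binary cubic form over $\mathbb{F}_q[t]$ of discriminant $D$ whose Hessian $H_f=(P,Q,R)$ is imaginary or unusual, and let $U=2b^3+27a^2d-9abc$. Then $|U|^2\le|P|^3$ and $|a^2D|\le|P|^3$.
   Context: $\mathbb{F}_q$ is a finite field with $\gcd(q,6)=1$; $|H|=q^{\deg H}$ for nonzero $H\in\mathbb{F}_q[t]$, $|0|=0$. A binary cubic form $(a,b,c,d)$ is $ax^3+bx^2y+cxy^2+dy^3$ with discriminant $D=18abcd+b^2c^2-4ac^3-4b^3d-27a^2d^2$; its Hessian is $(P,Q,R)$ with $P=b^2-3ac$, $Q=bc-9ad$, $R=c^2-3bd$, a binary quadratic form of discriminant $-3D$. The Hessian is imaginary if $\deg(-3D)$ is odd, and unusual if $\deg(-3D)$ is even and its leading coefficient is a non-square in $\mathbb{F}_q^*$. One has the identity $4P^3=U^2+27a^2D$. *)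

theory Defs
  imports "HOL-Computational_Algebra.Polynomial"
begin

definition pabs :: "'a::{field,finite} poly \<Rightarrow> nat" where
  "pabs H = (if H = 0 then 0 else card (UNIV :: 'a set) ^ degree H)"

definition cubic_disc :: "'a::comm_ring_1 poly \<Rightarrow> 'a poly \<Rightarrow> 'a poly \<Rightarrow> 'a poly \<Rightarrow> 'a poly" where
  "cubic_disc a b c d = 18*a*b*c*d + b^2*c^2 - 4*a*c^3 - 4*b^3*d - 27*a^2*d^2"

definition hess_P :: "'a::comm_ring_1 poly \<Rightarrow> 'a poly \<Rightarrow> 'a poly \<Rightarrow> 'a poly \<Rightarrow> 'a poly" where
  "hess_P a b c d = b^2 - 3*a*c"
definition hess_Q :: "'a::comm_ring_1 poly \<Rightarrow> 'a poly \<Rightarrow> 'a poly \<Rightarrow> 'a poly \<Rightarrow> 'a poly" where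
  "hess_Q a b c d = b*c - 9*a*d"
definition hess_R :: "'a::comm_ring_1 poly \<Rightarrow> 'a poly \<Rightarrow> 'a poly \<Rightarrow> 'a poly \<Rightarrow> 'a poly" where
  "hess_R a b c d = c^2 - 3*b*d"

text \<open>The Hessian (P,Q,R) has discriminant -3D; imaginary: deg(-3D) odd;
 unusual: deg(-3D) even and lead coeff a non-square in F_q^*.\<close>
definition hessian_imaginary :: "'a::{field,finite} poly \<Rightarrow> 'a poly \<Rightarrow> 'a poly \<Rightarrow> 'a poly \<Rightarrow> bool" where
  "hessian_imaginary a b c d = odd (degree (- 3 * cubic_disc a b c d))"

definition hessian_unusual :: "'a::{field,finite} poly \<Rightarrow> 'a poly \<Rightarrow> 'a poly \<Rightarrow> 'a poly \<Rightarrow> bool" where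
  "hessian_unusual a b c d = (let E = - 3 * cubic_disc a b c d in
     even (degree E) \<and> lead_coeff E \<noteq> 0 \<and> \<not> (\<exists>y. y^2 = lead_coeff E))"

end

theory Submission
  imports Defs "HOL-Number_Theory.Residues"
begin

text \<open>
  Write U = 2b^3 + 27a^2d - 9abc, P = b^2 - 3ac, D the discriminant and E = -3D.
  The proof rests on the classical syzygy 4P^3 = U^2 - 9a^2E.  Since |.| is
  multiplicative and nonzero constants have absolute value 1, the two claims say
  that neither U^2 nor 9a^2E is larger than their difference.  This holds by the
  ultrametric property of the degree unless the two terms have equal degree and
  equal leading coefficient; but then E would have even degree and leading
  coefficient (lc U / (3 lc a))^2, a square, which is exactly what an imaginary
  or unusual Hessian rules out.
\<close>

lemma of_nat_nonzero_if_coprime_card: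
  assumes "coprime (card (UNIV :: 'a::{field,finite} set)) n"
  shows "(of_nat n :: 'a) \<noteq> 0"
proof
  assume "(of_nat n :: 'a) = 0"
  then have "CHAR('a) dvd n" by (simp add: of_nat_eq_0_iff_char_dvd)
  moreover have "CHAR('a) dvd card (UNIV :: 'a set)" by (rule CHAR_dvd_CARD)
  ultimately have "CHAR('a) dvd 1"
    using assms coprime_common_divisor by blast
  then show False by simp
qed

text \<open>Hence, when gcd(q,6) = 1, every number 2^i 3^j is nonzero in the field;
  the theorem needs 3, 4 and 27.\<close>
lemma smooth_number_nonzero:
  assumes "coprime (card (UNIV :: 'a::{field,finite} set)) (6::nat)"
  shows "(of_nat (2 ^ i * 3 ^ j) :: 'a) \<noteq> 0"
proof -
  have "coprime (card (UNIV :: 'a set)) (2 * 3 :: nat)" using assms by simp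
  then have "coprime (card (UNIV :: 'a set)) (2::nat) \<and> coprime (card (UNIV :: 'a set)) (3::nat)"
    by (simp only: coprime_mult_right_iff)
  then have "coprime (card (UNIV :: 'a set)) (2 ^ i * 3 ^ j :: nat)"
    by (simp add: coprime_mult_right_iff coprime_power_right_iff)
  then show ?thesis by (rule of_nat_nonzero_if_coprime_card)
qed

lemma pabs_mult: "pabs (x * y) = pabs x * pabs (y::'a::{field,finite} poly)"
  by (auto simp: pabs_def degree_mult_eq power_add)

lemma pabs_power: "pabs (x ^ n) = pabs (x::'a::{field,finite} poly) ^ n"
proof (induction n)
  case 0
  show ?case by (simp add: pabs_def)
next
  case (Suc n)
  then show ?case by (simp add: pabs_mult)
qed

lemma pabs_uminus: "pabs (- x) = pabs (x::'a::{field,finite} poly)"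
  by (simp add: pabs_def)

lemma pabs_numeral:
  assumes "(numeral n :: 'a::{field,finite}) \<noteq> 0"
  shows "pabs (numeral n :: 'a poly) = 1"
  using assms by (simp add: pabs_def numeral_poly)

lemma pabs_mono:
  fixes X Z :: "'a::{field,finite} poly"
  assumes "Z \<noteq> 0" "degree X \<le> degree Z"
  shows "pabs X \<le> pabs Z"
proof -
  have "card (UNIV::'a set) \<ge> 1"
    by (simp add: Suc_leI finite_UNIV_card_ge_0)
  with assms(2) have "card (UNIV::'a set) ^ degree X \<le> card (UNIV::'a set) ^ degree Z"
    by (rule power_increasing)
  then show ?thesis using assms(1) by (simp add: pabs_def)
qed

lemma degree_diff_no_cancel:
  fixes X Y :: "'a::field poly"
  assumes "X \<noteq> 0" "Y \<noteq> 0"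
    and "degree X \<noteq> degree Y \<or> lead_coeff X \<noteq> lead_coeff Y"
  shows "X - Y \<noteq> 0" "degree (X - Y) = max (degree X) (degree Y)"
proof -
  consider "degree X = degree Y" "lead_coeff X \<noteq> lead_coeff Y"
    | "degree Y < degree X" | "degree X < degree Y"
    using assms(3) by linarith
  then have "X - Y \<noteq> 0 \<and> degree (X - Y) = max (degree X) (degree Y)"
  proof cases
    case 1
    then have "Polynomial.coeff (X - Y) (degree X) \<noteq> 0" by simp
    then have "X - Y \<noteq> 0" "degree X \<le> degree (X - Y)" by (auto intro: le_degree)
    moreover have "degree (X - Y) \<le> max (degree X) (degree Y)" by (rule degree_diff_le_max)
    ultimately show ?thesis using 1 by simp
  next
    case 2
    then have "degree (X + - Y) = degree X" by (intro degree_add_eq_left) simp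
    then show ?thesis using 2 assms(1) by auto
  next
    case 3
    then have "degree (X + - Y) = degree Y" using degree_add_eq_right[of X "- Y"] by simp
    then show ?thesis using 3 assms(2) by auto
  qed
  then show "X - Y \<noteq> 0" "degree (X - Y) = max (degree X) (degree Y)" by auto
qed

lemma pabs_le_pabs_diff:
  fixes X Y :: "'a::{field,finite} poly"
  assumes "X = 0 \<or> Y = 0 \<or> degree X \<noteq> degree Y \<or> lead_coeff X \<noteq> lead_coeff Y"
  shows "pabs X \<le> pabs (X - Y) \<and> pabs Y \<le> pabs (X - Y)"
proof -
  consider "X = 0" | "Y = 0" | "X \<noteq> 0" "Y \<noteq> 0" "degree X \<noteq> degree Y \<or> lead_coeff X \<noteq> lead_coeff Y"
    using assms by blast
  then show ?thesis
  proof cases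
    case 1
    then show ?thesis by (simp add: pabs_uminus pabs_def)
  next
    case 2
    then show ?thesis by (simp add: pabs_def)
  next
    case 3
    note diff = degree_diff_no_cancel[OF 3]
    show ?thesis
      using pabs_mono[OF diff(1), of X] pabs_mono[OF diff(1), of Y] diff(2) by simp
  qed
qed

lemma cubic_syzygy:
  fixes a b c d :: "'b::comm_ring_1"
  shows "4 * (b^2 - 3*a*c)^3 = (2*b^3 + 27*a^2*d - 9*a*b*c)^2
    + 27*a^2*(18*a*b*c*d + b^2*c^2 - 4*a*c^3 - 4*b^3*d - 27*a^2*d^2)"
  by (simp add: algebra_simps power2_eq_square power3_eq_cube)

lemma hessian_syzygy:
  fixes a b c d :: "'a::comm_ring_1 poly"
  shows "4 * hess_P a b c d ^ 3
    = (2*b^3 + 27*a^2*d - 9*a*b*c)^2 - 9*a^2*(-3 * cubic_disc a b c d)"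
proof -
  have "(2*b^3 + 27*a^2*d - 9*a*b*c)^2 - 9*a^2*(-3 * cubic_disc a b c d)
      = (2*b^3 + 27*a^2*d - 9*a*b*c)^2 + 27*a^2 * cubic_disc a b c d"
    by (simp add: algebra_simps)
  then show ?thesis
    unfolding hess_P_def by (simp only: cubic_disc_def cubic_syzygy)
qed

text \<open>If E is nonzero and either of odd degree or with non-square leading
  coefficient, then U^2 and 9a^2E (a nonzero) cannot share their leading term:
  otherwise E would have even degree and a square leading coefficient.\<close>
lemma no_leading_cancellation:
  fixes U a E :: "'a::field poly"
  assumes three: "(3::'a) \<noteq> 0" and "a \<noteq> 0" "E \<noteq> 0"
    and E: "odd (degree E) \<or> \<not> (\<exists>y. y^2 = lead_coeff E)"
  shows "degree (U^2) \<noteq> degree (9*a^2*E) \<or> lead_coeff (U^2) \<noteq> lead_coeff (9*a^2*E)"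
proof (rule ccontr)
  assume "\<not> ?thesis"
  then have deg: "degree (U^2) = degree (9*a^2*E)"
    and lead: "lead_coeff U ^ 2 = 9 * lead_coeff a ^ 2 * lead_coeff E"
    by (auto simp: lead_coeff_power lead_coeff_mult numeral_poly)
  have la: "lead_coeff a \<noteq> 0" using \<open>a \<noteq> 0\<close> by simp
  have "(9::'a) \<noteq> 0" using no_zero_divisors[OF three three] by simp
  have square: "lead_coeff E = (lead_coeff U / (3 * lead_coeff a))^2"
    using lead la \<open>(9::'a) \<noteq> 0\<close> by (simp add: power_divide power_mult_distrib)
  then have "U \<noteq> 0" using \<open>E \<noteq> 0\<close> \<open>(9::'a) \<noteq> 0\<close> lead la by auto
  then have "2 * degree U = 2 * degree a + degree E"
    using deg \<open>a \<noteq> 0\<close> \<open>E \<noteq> 0\<close> \<open>(9::'a) \<noteq> 0\<close>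
    by (simp add: degree_power_eq degree_mult_eq numeral_poly)
  then have "even (degree E)" by presburger
  moreover have "\<exists>y. y^2 = lead_coeff E" using square by (intro exI) (rule sym)
  ultimately show False using E by blast
qed

theorem mainTheorem9:
  fixes a b c d :: "'a::{field,finite} poly"
  assumes "coprime (card (UNIV :: 'a set)) (6::nat)"
    and "hessian_imaginary a b c d \<or> hessian_unusual a b c d"
  shows "pabs (2*b^3 + 27*a^2*d - 9*a*b*c) ^ 2 \<le> pabs (hess_P a b c d) ^ 3
     \<and> pabs (a^2 * cubic_disc a b c d) \<le> pabs (hess_P a b c d) ^ 3"
proof -
  define U where "U = 2*b^3 + 27*a^2*d - 9*a*b*c"
  define E where "E = - 3 * cubic_disc a b c d"
  have nonzero: "(3::'a) \<noteq> 0" "(4::'a) \<noteq> 0" "(27::'a) \<noteq> 0"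
    using smooth_number_nonzero[OF assms(1), of 0 1] smooth_number_nonzero[OF assms(1), of 2 0]
      smooth_number_nonzero[OF assms(1), of 0 3] by simp_all
  have E: "E \<noteq> 0" "odd (degree E) \<or> \<not> (\<exists>y. y^2 = lead_coeff E)"
    using assms(2) unfolding E_def hessian_imaginary_def hessian_unusual_def Let_def by auto
  have "pabs (U^2) \<le> pabs (U^2 - 9*a^2*E) \<and> pabs (9*a^2*E) \<le> pabs (U^2 - 9*a^2*E)"
    using no_leading_cancellation[OF nonzero(1) _ E] by (intro pabs_le_pabs_diff) auto
  moreover have "pabs (U^2 - 9*a^2*E) = pabs (hess_P a b c d) ^ 3"
    unfolding U_def E_def hessian_syzygy[symmetric]
    using nonzero(2) by (simp add: pabs_mult pabs_power pabs_numeral)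
  moreover have "pabs (9*a^2*E) = pabs (a^2 * cubic_disc a b c d)"
  proof -
    have "9*a^2*E = - (27 * (a^2 * cubic_disc a b c d))"
      unfolding E_def by (simp add: algebra_simps)
    then show ?thesis
      using nonzero(3) by (simp add: pabs_mult pabs_uminus pabs_numeral)
  qed
  ultimately show ?thesis
    unfolding U_def by (simp add: pabs_power)
qed

end
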